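(* Let $\mathcal{K}$ be a compact second-countable Hausdorff space, let $\mathcal{C}$ be the set of continuous functions $\mathcal{K}\to\mathbb{R}$, and let $\mathcal{F}\subseteq\mathcal{C}$ be a generating system. For every $\mathcal{F}$-moment function sequence $w=(w_f:f\in\mathcal{F})$ there is a $\mathcal{K}$-graphon $W$ whose $\mathcal{F}$-moment representation is $w$, i.e. $\int_{\mathcal{K}}f\,dW(x,y)=w_f(x,y)$ for all $f\in\mathcal{F}$ and $x,y\in[0,1]$.
   Context: A generating system is a subset of $\mathcal{C}$ whose linear span is dense in $\mathcal{C}$ in supremum norm. An $\mathcal{F}$-moment sequence is a family $(a_f:f\in\mathcal{F})$ of reals of the form $a_f=\int_{\mathcal{K}}f\,d\mu$ for some Borel probability measure $\mu$ on $\mathcal{K}$. An $\mathcal{F}$-moment function sequence is a family $(w_f:f\in\mathcal{F})$ of bounded symmetric measurable functions $w_f:[0,1]^2\to\mathbb{R}$ such that $(w_f(x,y):f\in\mathcal{F})$ is an $\mathcal{F}$-moment sequence for all $x,y\in[0,1]$. Let $\mathcal{P}(\mathcal{K})$ be the space of Borel probability measures on $\mathcal{K}$ with the weak topology. A $\mathcal{K}$-graphon is a Borel measurable map $W:[0,1]^2\to\mathcal{P}(\mathcal{K})$ with $W(x,y)=W(y,x)$; its $\mathcal{F}$-moment representation is $(W_f:f\in\mathcal{F})$ with $W_f(x,y)=\int_{\mathcal{K}}f\,dW(x,y)$. *)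

theory Defs
  imports "HOL-Analysis.Analysis" "HOL-Probability.Probability"
begin

definition cont_funs :: "('k::topological_space \<Rightarrow> real) set" where
  "cont_funs = {f. continuous_on UNIV f}"

definition generating_system :: "('k::topological_space \<Rightarrow> real) set \<Rightarrow> bool" where
  "generating_system F \<longleftrightarrow> F \<subseteq> cont_funs \<and>
     (\<forall>g\<in>cont_funs. \<forall>e>0. \<exists>G c. finite G \<and> G \<subseteq> F \<and>
         (\<forall>x. \<bar>g x - (\<Sum>f\<in>G. c f * f x)\<bar> < e))"

definition borel_prob_measures :: "'k::topological_space measure set" where
  "borel_prob_measures = {M. sets M = sets borel \<and> prob_space M}"

definition weak_topology :: "'k::topological_space measure topology" where
  "weak_topology = topology_generated_by
     {{M \<in> borel_prob_measures. (\<integral>x. f x \<partial>M) \<in> U} | f U. f \<in> cont_funs \<and> open U}"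

definition borel_of :: "'a topology \<Rightarrow> 'a measure" where
  "borel_of T = sigma (topspace T) {U. openin T U}"

definition unit_square :: "(real \<times> real) measure" where
  "unit_square = restrict_space borel ({0..1} \<times> {0..1})"

definition moment_sequence :: "('k::topological_space \<Rightarrow> real) set \<Rightarrow> (('k \<Rightarrow> real) \<Rightarrow> real) \<Rightarrow> bool" where
  "moment_sequence F a \<longleftrightarrow> (\<exists>\<mu>\<in>borel_prob_measures. \<forall>f\<in>F. a f = (\<integral>x. f x \<partial>\<mu>))"

definition moment_function_sequence ::
  "('k::topological_space \<Rightarrow> real) set \<Rightarrow> (('k \<Rightarrow> real) \<Rightarrow> real \<Rightarrow> real \<Rightarrow> real) \<Rightarrow> bool" where
  "moment_function_sequence F w \<longleftrightarrow>
     (\<forall>f\<in>F. (\<lambda>(x,y). w f x y) \<in> borel_measurable unit_square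
         \<and> (\<exists>B. \<forall>x\<in>{0..1}. \<forall>y\<in>{0..1}. \<bar>w f x y\<bar> \<le> B)
         \<and> (\<forall>x\<in>{0..1}. \<forall>y\<in>{0..1}. w f x y = w f y x))
     \<and> (\<forall>x\<in>{0..1}. \<forall>y\<in>{0..1}. moment_sequence F (\<lambda>f. w f x y))"

definition K_graphon :: "(real \<Rightarrow> real \<Rightarrow> 'k::topological_space measure) \<Rightarrow> bool" where
  "K_graphon W \<longleftrightarrow>
     (\<lambda>(x,y). W x y) \<in> unit_square \<rightarrow>\<^sub>M borel_of (weak_topology :: 'k measure topology)
     \<and> (\<forall>x\<in>{0..1}. \<forall>y\<in>{0..1}. W x y = W y x)"

end

theory Submission
  imports Defs
begin

text \<open>Choose \<open>W(x,y)\<close> pointwise as some probability measure with the prescribed moments; choosing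
  it from a predicate that is symmetric in \<open>x\<close> and \<open>y\<close> makes \<open>W\<close> symmetric. For measurability,
  first every \<open>(x,y) \<mapsto> \<integral>g dW(x,y)\<close> with \<open>g\<close> continuous is measurable, being a pointwise limit
  of finite linear combinations of the \<open>w\<^sub>f\<close>. Then, since \<open>C(K)\<close> is separable (Stone--Weierstrass
  applied to the rational algebra generated by countably many Urysohn functions separating points),
  every weakly open set is a countable union of finite intersections of sets
  \<open>{\<mu>. \<integral>h d\<mu> \<in> (a,b)}\<close> with \<open>h\<close> from a countable dense set and \<open>a, b\<close> rational, whose preimages
  under \<open>W\<close> are measurable.\<close>

lemma continuous_on_compact_UNIV_bound:
  fixes g :: "'k::topological_space \<Rightarrow> real"
  assumes "compact (UNIV :: 'k set)" and "continuous_on UNIV g"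
  obtains B where "\<And>x. \<bar>g x\<bar> \<le> B"
proof -
  have "bounded (range g)"
    using assms by (intro compact_imp_bounded compact_continuous_image)
  then show ?thesis
    using that unfolding bounded_iff by auto
qed

lemma integrable_cont_fun:
  fixes g :: "'k::topological_space \<Rightarrow> real"
  assumes "compact (UNIV :: 'k set)" and "M \<in> borel_prob_measures" and "g \<in> cont_funs"
  shows "integrable M g"
proof -
  interpret prob_space M
    using assms(2) by (simp add: borel_prob_measures_def)
  have "continuous_on UNIV g"
    using assms(3) by (simp add: cont_funs_def)
  then obtain B where "\<And>x. \<bar>g x\<bar> \<le> B"
    using assms(1) continuous_on_compact_UNIV_bound by blast
  moreover have "g \<in> borel_measurable M"
    using \<open>continuous_on UNIV g\<close> assms(2)
    by (simp add: borel_prob_measures_def borel_measurable_continuous_onI cong: measurable_cong_sets)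
  ultimately show ?thesis
    by (intro integrable_const_bound[where B = B]) auto
qed

lemma abs_integral_diff_le:
  fixes f h :: "'k::topological_space \<Rightarrow> real"
  assumes "compact (UNIV :: 'k set)" and M: "M \<in> borel_prob_measures"
    and "f \<in> cont_funs" and "h \<in> cont_funs" and close: "\<And>x. \<bar>f x - h x\<bar> \<le> e"
  shows "\<bar>(\<integral>x. f x \<partial>M) - (\<integral>x. h x \<partial>M)\<bar> \<le> e"
proof -
  interpret prob_space M
    using M by (simp add: borel_prob_measures_def)
  have "(\<integral>x. f x \<partial>M) - (\<integral>x. h x \<partial>M) = (\<integral>x. f x - h x \<partial>M)"
    using assms by (simp add: integrable_cont_fun)
  also have "\<bar>\<dots>\<bar> \<le> (\<integral>x. \<bar>f x - h x\<bar> \<partial>M)"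
    by (rule integral_abs_bound)
  also have "\<dots> \<le> e"
    using close assms by (intro integral_le_const) (auto simp: integrable_cont_fun)
  finally show ?thesis .
qed

section \<open>Separability of the continuous functions\<close>

lemma compact_Hausdorff_normal_space:
  assumes "compact (UNIV :: 'k::t2_space set)"
  shows "normal_space (euclidean :: 'k topology)"
proof (rule compact_Hausdorff_or_regular_imp_normal_space)
  show "compact_space (euclidean :: 'k topology)"
    using assms by (simp add: compact_space_def)
  show "Hausdorff_space (euclidean :: 'k topology) \<or> regular_space (euclidean :: 'k topology)"
    unfolding Hausdorff_space_def using hausdorff by (metis disjnt_def open_openin)
qed

lemma Urysohn_basic_pair:
  fixes B :: "'k::t2_space set set"
  assumes "compact (UNIV :: 'k set)" and B: "topological_basis B" and "x \<noteq> y"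
  obtains U V f where "U \<in> B" "V \<in> B" "x \<in> U" "y \<notin> V"
    and "continuous_on UNIV f" "\<And>z. z \<in> U \<Longrightarrow> f z = (0::real)" "\<And>z. z \<notin> V \<Longrightarrow> f z = 1"
proof -
  have normal: "normal_space (euclidean :: 'k topology)"
    using assms(1) by (rule compact_Hausdorff_normal_space)
  have "open (-{y})" "x \<in> -{y}"
    using \<open>x \<noteq> y\<close> by auto
  then obtain V where V: "V \<in> B" "x \<in> V" "V \<subseteq> -{y}"
    using B by (meson topological_basisE)
  have "open V"
    using B V(1) topological_basis_open by blast
  have "closedin euclidean {x}" "closedin euclidean (-V)" "disjnt {x} (-V)"
    using \<open>open V\<close> V by (auto simp: disjnt_def)
  then obtain U' Q where U'Q: "open U'" "open Q" "{x} \<subseteq> U'" "-V \<subseteq> Q" "disjnt U' Q"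
    using normal unfolding normal_space_def by (metis open_openin)
  obtain U where U: "U \<in> B" "x \<in> U" "U \<subseteq> U'"
    using B U'Q by (meson insert_subset topological_basisE)
  have "closure U \<subseteq> -Q"
    using U U'Q by (intro closure_minimal) (auto simp: disjnt_def)
  then have "disjnt (closure U) (-V)"
    using U'Q by (auto simp: disjnt_def)
  then obtain f where f: "continuous_map euclidean euclideanreal f"
      "f ` closure U \<subseteq> {0}" "f ` (-V) \<subseteq> {1}"
    using Urysohn_lemma_alt[OF normal, of "closure U" "-V" 0 1] \<open>open V\<close> by auto
  show ?thesis
  proof (rule that[OF U(1) V(1) U(2)])
    show "y \<notin> V"
      using V(3) by auto
    show "continuous_on UNIV f"
      using f(1) by (simp add: continuous_map_iff_continuous)
    show "f z = 0" if "z \<in> U" for z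
      using f(2) closure_subset that by blast
    show "f z = 1" if "z \<notin> V" for z
      using f(3) that by blast
  qed
qed

lemma countable_point_separating_cont_funs:
  assumes cK: "compact (UNIV :: 'k set)"
  obtains G :: "('k::{second_countable_topology, t2_space} \<Rightarrow> real) set"
  where "countable G" and "G \<subseteq> cont_funs" and "\<And>x y. x \<noteq> y \<Longrightarrow> \<exists>g\<in>G. g x \<noteq> g y"
proof -
  obtain B :: "'k set set" where B: "countable B" "topological_basis B"
    using ex_countable_basis by blast
  define urysohn where "urysohn U V f \<longleftrightarrow>
      continuous_on UNIV f \<and> (\<forall>z\<in>U. f z = (0::real)) \<and> (\<forall>z. z \<notin> V \<longrightarrow> f z = 1)"
    for U V :: "'k set" and f
  define S where "S = {(U, V) \<in> B \<times> B. \<exists>f. urysohn U V f}"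
  define G where "G = (\<lambda>(U, V). SOME f. urysohn U V f) ` S"
  have urysohn_chosen: "urysohn U V (SOME f. urysohn U V f)" if "(U, V) \<in> S" for U V
  proof -
    have "\<exists>f. urysohn U V f"
      using that unfolding S_def by auto
    then show ?thesis
      by (rule someI_ex)
  qed
  have "S \<subseteq> B \<times> B"
    unfolding S_def by auto
  then have "countable S"
    using countable_subset countable_SIGMA[OF B(1) B(1)] by blast
  then have "countable G"
    unfolding G_def by simp
  moreover have "G \<subseteq> cont_funs"
  proof
    fix g assume "g \<in> G"
    then obtain U V where "(U, V) \<in> S" "g = (SOME f. urysohn U V f)"
      unfolding G_def by auto
    then have "urysohn U V g"
      using urysohn_chosen by simp
    then show "g \<in> cont_funs"
      unfolding urysohn_def cont_funs_def by simp
  qed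
  moreover have "\<exists>g\<in>G. g x \<noteq> g y" if "x \<noteq> y" for x y
  proof -
    obtain U V f where "U \<in> B" "V \<in> B" "x \<in> U" "y \<notin> V" "urysohn U V f"
      using Urysohn_basic_pair[OF cK B(2) \<open>x \<noteq> y\<close>] unfolding urysohn_def by metis
    then have UV: "(U, V) \<in> S"
      unfolding S_def by auto
    define g where "g = (SOME f. urysohn U V f)"
    have "g \<in> G"
      unfolding G_def g_def using UV by (rule rev_image_eqI) simp
    moreover have "g x = 0" "g y = 1"
      using urysohn_chosen[OF UV] \<open>x \<in> U\<close> \<open>y \<notin> V\<close> unfolding g_def urysohn_def by auto
    ultimately show ?thesis
      by (intro bexI[of _ g]) auto
  qed
  ultimately show ?thesis
    by (rule that)
qed

definition uniformly_approximable :: "('a \<Rightarrow> real) set \<Rightarrow> ('a \<Rightarrow> real) \<Rightarrow> bool" where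
  "uniformly_approximable H f \<longleftrightarrow> (\<forall>e>0. \<exists>h\<in>H. \<forall>x. \<bar>f x - h x\<bar> < e)"

lemma uniformly_approximable_add:
  assumes add: "\<And>h h'. h \<in> H \<Longrightarrow> h' \<in> H \<Longrightarrow> (\<lambda>x. h x + h' x) \<in> H"
    and "uniformly_approximable H f" and "uniformly_approximable H g"
  shows "uniformly_approximable H (\<lambda>x. f x + g x)"
  unfolding uniformly_approximable_def
proof (intro allI impI)
  fix e :: real assume "e > 0"
  then obtain h h' where h: "h \<in> H" "\<forall>x. \<bar>f x - h x\<bar> < e / 2"
    and h': "h' \<in> H" "\<forall>x. \<bar>g x - h' x\<bar> < e / 2"
    using assms(2,3) unfolding uniformly_approximable_def by (meson half_gt_zero)
  have "\<bar>f x + g x - (h x + h' x)\<bar> < e" for x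
  proof -
    have "\<bar>f x + g x - (h x + h' x)\<bar> \<le> \<bar>f x - h x\<bar> + \<bar>g x - h' x\<bar>"
      using abs_triangle_ineq[of "f x - h x" "g x - h' x"] by (simp add: algebra_simps)
    then show ?thesis
      using h(2)[rule_format, of x] h'(2)[rule_format, of x] by linarith
  qed
  then show "\<exists>h''\<in>H. \<forall>x. \<bar>f x + g x - h'' x\<bar> < e"
    using add[OF h(1) h'(1)] by (intro bexI[of _ "\<lambda>x. h x + h' x"] allI) simp_all
qed

lemma abs_mult_diff_le:
  fixes a b c d :: real
  shows "\<bar>a * b - c * d\<bar> \<le> \<bar>a\<bar> * \<bar>b - d\<bar> + \<bar>a - c\<bar> * \<bar>d\<bar>"
proof -
  have "\<bar>a * b - c * d\<bar> = \<bar>a * (b - d) + (a - c) * d\<bar>"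
    by (simp add: algebra_simps)
  also have "\<dots> \<le> \<bar>a * (b - d)\<bar> + \<bar>(a - c) * d\<bar>"
    by (rule abs_triangle_ineq)
  finally show ?thesis
    by (simp add: abs_mult)
qed

lemma uniformly_approximable_mult:
  assumes mult: "\<And>h h'. h \<in> H \<Longrightarrow> h' \<in> H \<Longrightarrow> (\<lambda>x. h x * h' x) \<in> H"
    and "uniformly_approximable H f" and "uniformly_approximable H g"
    and f_bound: "\<And>x. \<bar>f x\<bar> \<le> B1" and g_bound: "\<And>x. \<bar>g x\<bar> \<le> B2"
  shows "uniformly_approximable H (\<lambda>x. f x * g x)"
  unfolding uniformly_approximable_def
proof (intro allI impI)
  fix e :: real assume "e > 0"
  have "B1 \<ge> 0" "B2 \<ge> 0"
    using f_bound g_bound abs_ge_zero order_trans by blast+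
  define d where "d = min 1 (e / (B1 + B2 + 2))"
  have "d > 0" "d \<le> 1"
    using \<open>e > 0\<close> \<open>B1 \<ge> 0\<close> \<open>B2 \<ge> 0\<close> by (auto simp: d_def)
  have "d \<le> e / (B1 + B2 + 2)"
    by (simp add: d_def)
  then have "d * (B1 + B2 + 2) \<le> e"
    using \<open>B1 \<ge> 0\<close> \<open>B2 \<ge> 0\<close> by (simp add: le_divide_eq)
  obtain h h' where h: "h \<in> H" "\<And>x. \<bar>f x - h x\<bar> < d" and h': "h' \<in> H" "\<And>x. \<bar>g x - h' x\<bar> < d"
    using assms(2,3) \<open>d > 0\<close> unfolding uniformly_approximable_def by meson
  have "\<bar>f x * g x - h x * h' x\<bar> < e" for x
  proof -
    have "\<bar>h' x\<bar> \<le> B2 + 1"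
      using g_bound[of x] h'(2)[of x] \<open>d \<le> 1\<close> by linarith
    have "\<bar>f x * g x - h x * h' x\<bar> \<le> \<bar>f x\<bar> * \<bar>g x - h' x\<bar> + \<bar>f x - h x\<bar> * \<bar>h' x\<bar>"
      by (rule abs_mult_diff_le)
    also have "\<dots> \<le> B1 * d + d * (B2 + 1)"
      using f_bound[of x] h(2)[of x] h'(2)[of x] \<open>\<bar>h' x\<bar> \<le> B2 + 1\<close> \<open>B1 \<ge> 0\<close>
      by (intro add_mono mult_mono) auto
    also have "\<dots> < d * (B1 + B2 + 2)"
      using \<open>d > 0\<close> by (simp add: algebra_simps)
    finally show ?thesis
      using \<open>d * (B1 + B2 + 2) \<le> e\<close> by linarith
  qed
  then show "\<exists>h''\<in>H. \<forall>x. \<bar>f x * g x - h'' x\<bar> < e"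
    using mult[OF h(1) h'(1)] by (intro bexI[of _ "\<lambda>x. h x * h' x"] allI) simp_all
qed

lemma uniformly_approximable_const:
  assumes "\<And>q. (\<lambda>_. real_of_rat q) \<in> H"
  shows "uniformly_approximable H (\<lambda>_. c)"
  unfolding uniformly_approximable_def
proof (intro allI impI)
  fix e :: real assume "e > 0"
  then obtain r where "r \<in> \<rat>" "c - e < r" "r < c"
    using Rats_dense_in_real[of "c - e" c] by auto
  then obtain q where "r = real_of_rat q"
    using Rats_cases by blast
  then show "\<exists>h\<in>H. \<forall>x. \<bar>c - h x\<bar> < e"
    using assms \<open>c - e < r\<close> \<open>r < c\<close> by (intro bexI[of _ "\<lambda>_. real_of_rat q"]) auto
qed

lemma Stone_Weierstrass_uniformly_approximable:
  fixes H :: "('k::t2_space \<Rightarrow> real) set"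
  assumes cK: "compact (UNIV :: 'k set)" and "H \<subseteq> cont_funs"
    and add: "\<And>h h'. h \<in> H \<Longrightarrow> h' \<in> H \<Longrightarrow> (\<lambda>x. h x + h' x) \<in> H"
    and mult: "\<And>h h'. h \<in> H \<Longrightarrow> h' \<in> H \<Longrightarrow> (\<lambda>x. h x * h' x) \<in> H"
    and const: "\<And>q. (\<lambda>_. real_of_rat q) \<in> H"
    and separating: "\<And>x y. x \<noteq> y \<Longrightarrow> \<exists>h\<in>H. h x \<noteq> h y"
    and "f \<in> cont_funs"
  shows "uniformly_approximable H f"
proof -
  define R where "R = {g \<in> cont_funs. uniformly_approximable H g}"
  have approx_H: "uniformly_approximable H h" if "h \<in> H" for h
    unfolding uniformly_approximable_def using that by (intro allI impI bexI[of _ h]) auto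
  have bounded: "\<exists>B. \<forall>x. \<bar>g x\<bar> \<le> B" if "g \<in> R" for g
    using that continuous_on_compact_UNIV_bound[OF cK] unfolding R_def cont_funs_def by blast
  interpret function_ring_on R UNIV
  proof
    show "continuous_on UNIV g" if "g \<in> R" for g
      using that by (simp add: R_def cont_funs_def)
    show "(\<lambda>x. g x + g' x) \<in> R" if "g \<in> R" "g' \<in> R" for g g'
    proof -
      have "continuous_on UNIV (\<lambda>x. g x + g' x)"
        using that by (intro continuous_on_add) (simp_all add: R_def cont_funs_def)
      moreover have "uniformly_approximable H (\<lambda>x. g x + g' x)"
        using that by (intro uniformly_approximable_add[OF add]) (simp_all add: R_def)
      ultimately show ?thesis
        by (simp add: R_def cont_funs_def)
    qed
    show "(\<lambda>x. g x * g' x) \<in> R" if g: "g \<in> R" and g': "g' \<in> R" for g g'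
    proof -
      have "continuous_on UNIV (\<lambda>x. g x * g' x)"
        using g g' by (intro continuous_on_mult) (simp_all add: R_def cont_funs_def)
      moreover obtain B1 B2 where "\<And>x. \<bar>g x\<bar> \<le> B1" "\<And>x. \<bar>g' x\<bar> \<le> B2"
        using bounded[OF g] bounded[OF g'] by blast
      then have "uniformly_approximable H (\<lambda>x. g x * g' x)"
        using g g' by (intro uniformly_approximable_mult[OF mult]) (simp_all add: R_def)
      ultimately show ?thesis
        by (simp add: R_def cont_funs_def)
    qed
    show "(\<lambda>_. c) \<in> R" for c
      using uniformly_approximable_const[OF const] by (simp add: R_def cont_funs_def)
    show "\<exists>g\<in>R. g x \<noteq> g y" if xy: "x \<noteq> y" for x y
    proof -
      obtain h where "h \<in> H" "h x \<noteq> h y"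
        using separating[OF xy] by blast
      then show ?thesis
        using approx_H \<open>H \<subseteq> cont_funs\<close> unfolding R_def by blast
    qed
  qed (rule cK)
  show ?thesis
    unfolding uniformly_approximable_def
  proof (intro allI impI)
    fix e :: real assume "e > 0"
    have "continuous_on UNIV f"
      using \<open>f \<in> cont_funs\<close> by (simp add: cont_funs_def)
    then obtain g where g: "g \<in> R" "\<forall>x\<in>UNIV. \<bar>f x - g x\<bar> < e / 2"
      using Stone_Weierstrass_basic[of f "e / 2"] \<open>e > 0\<close> by auto
    then have "uniformly_approximable H g"
      by (simp add: R_def)
    then obtain h where h: "h \<in> H" "\<forall>x. \<bar>g x - h x\<bar> < e / 2"
      using \<open>e > 0\<close> unfolding uniformly_approximable_def by (meson half_gt_zero)
    have "\<bar>f x - h x\<bar> < e" for x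
    proof -
      have "\<bar>f x - h x\<bar> \<le> \<bar>f x - g x\<bar> + \<bar>g x - h x\<bar>"
        using abs_triangle_ineq[of "f x - g x" "g x - h x"] by simp
      then show ?thesis
        using g(2) h(2) by (metis UNIV_I field_sum_of_halves add_strict_mono order_le_less_trans)
    qed
    then show "\<exists>h\<in>H. \<forall>x. \<bar>f x - h x\<bar> < e"
      using h(1) by blast
  qed
qed

datatype ring_expr = Gen nat | Cst rat | Add ring_expr ring_expr | Mul ring_expr ring_expr

instance ring_expr :: countable
  by countable_datatype

fun eval_ring_expr :: "(nat \<Rightarrow> 'a \<Rightarrow> real) \<Rightarrow> ring_expr \<Rightarrow> 'a \<Rightarrow> real" where
  "eval_ring_expr g (Gen n) x = g n x"
| "eval_ring_expr g (Cst q) x = real_of_rat q"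
| "eval_ring_expr g (Add a b) x = eval_ring_expr g a x + eval_ring_expr g b x"
| "eval_ring_expr g (Mul a b) x = eval_ring_expr g a x * eval_ring_expr g b x"

lemma continuous_on_eval_ring_expr:
  assumes "\<And>n. continuous_on UNIV (g n)"
  shows "continuous_on UNIV (eval_ring_expr g e)"
  by (induction e) (simp_all add: assms continuous_on_add continuous_on_mult)

lemma add_in_range_eval_ring_expr:
  assumes "h \<in> range (eval_ring_expr g)" and "h' \<in> range (eval_ring_expr g)"
  shows "(\<lambda>x. h x + h' x) \<in> range (eval_ring_expr g)"
proof -
  obtain a b where "h = eval_ring_expr g a" "h' = eval_ring_expr g b"
    using assms by blast
  then show ?thesis
    by (intro range_eqI[where x = "Add a b"]) auto
qed

lemma mult_in_range_eval_ring_expr: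
  assumes "h \<in> range (eval_ring_expr g)" and "h' \<in> range (eval_ring_expr g)"
  shows "(\<lambda>x. h x * h' x) \<in> range (eval_ring_expr g)"
proof -
  obtain a b where "h = eval_ring_expr g a" "h' = eval_ring_expr g b"
    using assms by blast
  then show ?thesis
    by (intro range_eqI[where x = "Mul a b"]) auto
qed

lemma const_in_range_eval_ring_expr: "(\<lambda>_. real_of_rat q) \<in> range (eval_ring_expr g)"
  by (intro range_eqI[where x = "Cst q"]) auto

lemma generator_in_range_eval_ring_expr: "g n \<in> range (eval_ring_expr g)"
  by (intro range_eqI[where x = "Gen n"]) auto

lemma countable_dense_cont_funs:
  assumes cK: "compact (UNIV :: 'k set)"
  obtains H :: "('k::{second_countable_topology, t2_space} \<Rightarrow> real) set"
  where "countable H" and "H \<subseteq> cont_funs" and "\<And>f. f \<in> cont_funs \<Longrightarrow> uniformly_approximable H f"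
proof -
  obtain G :: "('k \<Rightarrow> real) set" where G: "countable G" "G \<subseteq> cont_funs"
    and separating: "\<And>x y. x \<noteq> y \<Longrightarrow> \<exists>g\<in>G. g x \<noteq> g y"
    using countable_point_separating_cont_funs[OF cK] by blast
  \<comment> \<open>\<open>from_nat_into\<close> enumerates only nonempty countable sets.\<close>
  define g where "g = from_nat_into (insert (\<lambda>_. 0) G)"
  have range_g: "range g = insert (\<lambda>_. 0) G"
    unfolding g_def using G(1) by (intro range_from_nat_into) auto
  have "continuous_on UNIV (g n)" for n
    using range_g G(2) rangeI[of g n] by (auto simp: cont_funs_def)
  then have "range (eval_ring_expr g) \<subseteq> cont_funs"
    by (auto simp: cont_funs_def continuous_on_eval_ring_expr)
  moreover have "uniformly_approximable (range (eval_ring_expr g)) f" if "f \<in> cont_funs" for f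
  proof (rule Stone_Weierstrass_uniformly_approximable[OF cK \<open>range (eval_ring_expr g) \<subseteq> cont_funs\<close>])
    show "\<exists>h\<in>range (eval_ring_expr g). h x \<noteq> h y" if xy: "x \<noteq> y" for x y
    proof -
      obtain n where "g n x \<noteq> g n y"
        using separating[OF xy] range_g by (metis insertCI rangeE)
      then show ?thesis
        using generator_in_range_eval_ring_expr by blast
    qed
  qed (use that in \<open>simp_all add: add_in_range_eval_ring_expr mult_in_range_eval_ring_expr
    const_in_range_eval_ring_expr\<close>)
  ultimately show ?thesis
    using that[of "range (eval_ring_expr g)"] by simp
qed

section \<open>A countable base of the weak topology\<close>

definition weak_basic_set :: "(('k::topological_space \<Rightarrow> real) \<times> real \<times> real) set \<Rightarrow> 'k measure set" where
  "weak_basic_set S = {M \<in> borel_prob_measures. \<forall>(h, a, b) \<in> S. (\<integral>x. h x \<partial>M) \<in> {a<..<b}}"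

lemma weak_basic_set_Un: "weak_basic_set (S \<union> T) = weak_basic_set S \<inter> weak_basic_set T"
  unfolding weak_basic_set_def ball_Un by blast

text \<open>Choose \<open>h \<in> H\<close> within \<open>r/3\<close> of \<open>f\<close> and a rational interval of length at most \<open>2r/3\<close>
  around \<open>\<integral>h dM\<^sub>0\<close>, where \<open>r\<close> is the radius of a ball around \<open>\<integral>f dM\<^sub>0\<close> inside \<open>U\<close>.\<close>

lemma weak_basic_set_refines_subbasic:
  fixes H :: "('k::topological_space \<Rightarrow> real) set"
  assumes cK: "compact (UNIV :: 'k set)" and "H \<subseteq> cont_funs"
    and dense: "\<And>f. f \<in> cont_funs \<Longrightarrow> uniformly_approximable H f"
    and f: "f \<in> cont_funs" and "open U"
    and M0: "M0 \<in> borel_prob_measures" "(\<integral>x. f x \<partial>M0) \<in> U"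
  obtains h a b where "h \<in> H" "a \<in> \<rat>" "b \<in> \<rat>" "M0 \<in> weak_basic_set {(h, a, b)}"
    "weak_basic_set {(h, a, b)} \<subseteq> {M \<in> borel_prob_measures. (\<integral>x. f x \<partial>M) \<in> U}"
proof -
  obtain r where "r > 0" and r: "ball (\<integral>x. f x \<partial>M0) r \<subseteq> U"
    using \<open>open U\<close> M0(2) open_contains_ball by blast
  define e where "e = r / 3"
  have "e > 0"
    using \<open>r > 0\<close> by (simp add: e_def)
  obtain h where h: "h \<in> H" "\<forall>x. \<bar>f x - h x\<bar> < e"
    using dense[OF f] \<open>e > 0\<close> unfolding uniformly_approximable_def by blast
  have integral_close: "\<bar>(\<integral>x. f x \<partial>M) - (\<integral>x. h x \<partial>M)\<bar> \<le> e" if "M \<in> borel_prob_measures" for M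
    using abs_integral_diff_le[OF cK that f] h \<open>H \<subseteq> cont_funs\<close> by (simp add: less_imp_le subset_iff)
  define c where "c = (\<integral>x. h x \<partial>M0)"
  obtain a where a: "a \<in> \<rat>" "c - e < a" "a < c"
    using Rats_dense_in_real[of "c - e" c] \<open>e > 0\<close> by auto
  obtain b where b: "b \<in> \<rat>" "c < b" "b < c + e"
    using Rats_dense_in_real[of c "c + e"] \<open>e > 0\<close> by auto
  show ?thesis
  proof (rule that[OF h(1) a(1) b(1)])
    show "M0 \<in> weak_basic_set {(h, a, b)}"
      using M0(1) a b unfolding weak_basic_set_def c_def by simp
    show "weak_basic_set {(h, a, b)} \<subseteq> {M \<in> borel_prob_measures. (\<integral>x. f x \<partial>M) \<in> U}"
    proof
      fix M assume "M \<in> weak_basic_set {(h, a, b)}"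
      then have M: "M \<in> borel_prob_measures" "a < (\<integral>x. h x \<partial>M)" "(\<integral>x. h x \<partial>M) < b"
        unfolding weak_basic_set_def by auto
      have "\<bar>(\<integral>x. f x \<partial>M) - (\<integral>x. f x \<partial>M0)\<bar> < r"
        using integral_close[OF M(1), unfolded abs_le_iff] integral_close[OF M0(1), unfolded abs_le_iff]
          M(2,3) a b
        unfolding c_def e_def abs_less_iff by linarith
      then have "(\<integral>x. f x \<partial>M) \<in> U"
        using r by (simp add: dist_real_def abs_minus_commute subset_iff)
      then show "M \<in> {M \<in> borel_prob_measures. (\<integral>x. f x \<partial>M) \<in> U}"
        using M(1) by simp
    qed
  qed
qed

definition finite_rational_indices :: "('k \<Rightarrow> real) set \<Rightarrow> (('k \<Rightarrow> real) \<times> real \<times> real) set set" where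
  "finite_rational_indices H = {S. finite S \<and> S \<subseteq> H \<times> \<rat> \<times> \<rat>}"

lemma countable_finite_rational_indices:
  "countable H \<Longrightarrow> countable (finite_rational_indices H)"
  unfolding finite_rational_indices_def
  by (intro countable_Collect_finite_subset countable_SIGMA countable_rat)

lemma weak_topology_neighbourhood_base:
  fixes H :: "('k::topological_space \<Rightarrow> real) set"
  assumes cK: "compact (UNIV :: 'k set)" and HC: "H \<subseteq> cont_funs"
    and dense: "\<And>f. f \<in> cont_funs \<Longrightarrow> uniformly_approximable H f"
    and "openin weak_topology Op" and "M \<in> Op"
  obtains S where "S \<in> finite_rational_indices H" "M \<in> weak_basic_set S" "weak_basic_set S \<subseteq> Op"
proof -
  have "generate_topology_on
      {{M \<in> borel_prob_measures. (\<integral>x. f x \<partial>M) \<in> U} | f U. f \<in> cont_funs \<and> open U} Op"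
    using \<open>openin weak_topology Op\<close> by (simp add: weak_topology_def openin_topology_generated_by_iff)
  then have "\<forall>M\<in>Op. \<exists>S\<in>finite_rational_indices H. M \<in> weak_basic_set S \<and> weak_basic_set S \<subseteq> Op"
  proof (induction rule: generate_topology_on.induct)
    case Empty
    then show ?case
      by simp
  next
    case (Int O1 O2)
    show ?case
    proof
      fix M assume "M \<in> O1 \<inter> O2"
      then obtain S1 S2 where "S1 \<in> finite_rational_indices H" "M \<in> weak_basic_set S1" "weak_basic_set S1 \<subseteq> O1"
        and "S2 \<in> finite_rational_indices H" "M \<in> weak_basic_set S2" "weak_basic_set S2 \<subseteq> O2"
        using Int.IH by (meson IntD1 IntD2)
      then show "\<exists>S\<in>finite_rational_indices H. M \<in> weak_basic_set S \<and> weak_basic_set S \<subseteq> O1 \<inter> O2"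
        by (intro bexI[of _ "S1 \<union> S2"]) (auto simp: weak_basic_set_Un finite_rational_indices_def)
    qed
  next
    case (UN K)
    then show ?case
      by (meson UnionE Union_upper order_trans)
  next
    case (Basis s)
    then obtain f U where s: "s = {M \<in> borel_prob_measures. (\<integral>x. f x \<partial>M) \<in> U}"
      and "f \<in> cont_funs" "open U"
      by blast
    show ?case
    proof
      fix M assume "M \<in> s"
      then obtain h a b where "h \<in> H" "a \<in> \<rat>" "b \<in> \<rat>" "M \<in> weak_basic_set {(h, a, b)}"
        "weak_basic_set {(h, a, b)} \<subseteq> s"
        using weak_basic_set_refines_subbasic[OF cK HC dense \<open>f \<in> cont_funs\<close> \<open>open U\<close>] s by blast
      then show "\<exists>S\<in>finite_rational_indices H. M \<in> weak_basic_set S \<and> weak_basic_set S \<subseteq> s"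
        by (intro bexI[of _ "{(h, a, b)}"]) (auto simp: finite_rational_indices_def)
    qed
  qed
  then show ?thesis
    using that \<open>M \<in> Op\<close> by blast
qed

lemma topspace_weak_topology: "topspace weak_topology = borel_prob_measures"
proof -
  have "(\<lambda>_. 0) \<in> cont_funs"
    by (simp add: cont_funs_def)
  then have "borel_prob_measures \<in>
      {{M \<in> borel_prob_measures. (\<integral>x. f x \<partial>M) \<in> U} | f U. f \<in> cont_funs \<and> open U}"
    by (intro CollectI exI[of _ "\<lambda>_. 0"] exI[of _ UNIV]) auto
  then show ?thesis
    unfolding weak_topology_def topology_generated_by_topspace by blast
qed

lemma measurable_vimage_weak_basic_set:
  assumes prob: "\<And>p. p \<in> space N \<Longrightarrow> \<Phi> p \<in> borel_prob_measures" and "finite S"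
    and integral_measurable: "\<And>h a b. (h, a, b) \<in> S \<Longrightarrow> (\<lambda>p. \<integral>z. h z \<partial>\<Phi> p) \<in> borel_measurable N"
  shows "\<Phi> -` weak_basic_set S \<inter> space N \<in> sets N"
proof -
  have "\<Phi> -` weak_basic_set S \<inter> space N = {p \<in> space N. \<forall>(h, a, b) \<in> S. (\<integral>z. h z \<partial>\<Phi> p) \<in> {a<..<b}}"
    using prob unfolding weak_basic_set_def by auto
  also have "\<dots> \<in> sets N"
  proof (rule predE, rule pred_intros_finite[OF \<open>finite S\<close>])
    fix t assume "t \<in> S"
    then obtain h a b where t: "t = (h, a, b)" "(h, a, b) \<in> S"
      by (cases t) auto
    have "Measurable.pred N (\<lambda>p. (\<integral>z. h z \<partial>\<Phi> p) \<in> {a<..<b})"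
      by (rule pred_sets2[OF _ integral_measurable[OF t(2)]]) simp
    then show "Measurable.pred N (\<lambda>p. case t of (h, a, b) \<Rightarrow> (\<integral>z. h z \<partial>\<Phi> p) \<in> {a<..<b})"
      unfolding t(1) by simp
  qed
  finally show ?thesis .
qed

lemma measurable_weak_topologyI:
  fixes \<Phi> :: "'a \<Rightarrow> 'k::{second_countable_topology, t2_space} measure"
  assumes cK: "compact (UNIV :: 'k set)"
    and prob: "\<And>p. p \<in> space N \<Longrightarrow> \<Phi> p \<in> borel_prob_measures"
    and integral_measurable: "\<And>g. g \<in> cont_funs \<Longrightarrow> (\<lambda>p. \<integral>z. g z \<partial>\<Phi> p) \<in> borel_measurable N"
  shows "\<Phi> \<in> N \<rightarrow>\<^sub>M borel_of weak_topology"
  unfolding borel_of_def topspace_weak_topology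
proof (rule measurable_measure_of)
  show "{U. openin weak_topology U} \<subseteq> Pow borel_prob_measures"
    using openin_subset topspace_weak_topology by auto
  show "\<Phi> \<in> space N \<rightarrow> borel_prob_measures"
    using prob by auto
  obtain H :: "('k \<Rightarrow> real) set" where "countable H" "H \<subseteq> cont_funs"
    and dense: "\<And>f. f \<in> cont_funs \<Longrightarrow> uniformly_approximable H f"
    using countable_dense_cont_funs[OF cK] by blast
  fix Op :: "'k measure set" assume "Op \<in> {U. openin weak_topology U}"
  then have "openin weak_topology Op"
    by simp
  have "\<Phi> -` Op \<inter> space N =
      (\<Union>S \<in> {S \<in> finite_rational_indices H. weak_basic_set S \<subseteq> Op}. \<Phi> -` weak_basic_set S \<inter> space N)"
    (is "?L = ?R")
  proof
    show "?R \<subseteq> ?L"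
      by blast
    show "?L \<subseteq> ?R"
    proof
      fix p assume "p \<in> ?L"
      then have "\<Phi> p \<in> Op" "p \<in> space N"
        by auto
      obtain S where "S \<in> finite_rational_indices H" "\<Phi> p \<in> weak_basic_set S" "weak_basic_set S \<subseteq> Op"
        by (rule weak_topology_neighbourhood_base[OF cK \<open>H \<subseteq> cont_funs\<close> dense
              \<open>openin weak_topology Op\<close> \<open>\<Phi> p \<in> Op\<close>])
      then show "p \<in> ?R"
        using \<open>p \<in> space N\<close> by blast
    qed
  qed
  also have "\<dots> \<in> sets N"
  proof (intro sets.countable_UN'' ballI)
    show "countable {S \<in> finite_rational_indices H. weak_basic_set S \<subseteq> Op}"
      using countable_finite_rational_indices[OF \<open>countable H\<close>] by (rule countable_subset[rotated]) auto
    fix S assume "S \<in> {S \<in> finite_rational_indices H. weak_basic_set S \<subseteq> Op}"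
    then have "finite S" "S \<subseteq> cont_funs \<times> UNIV"
      using \<open>H \<subseteq> cont_funs\<close> by (auto simp: finite_rational_indices_def)
    then show "\<Phi> -` weak_basic_set S \<inter> space N \<in> sets N"
      using prob integral_measurable by (intro measurable_vimage_weak_basic_set) auto
  qed
  finally show "\<Phi> -` Op \<inter> space N \<in> sets N" .
qed

section \<open>Moment representations\<close>

lemma generating_system_approximating_sequence:
  assumes "generating_system F" and "g \<in> cont_funs"
  obtains G c where "\<And>n. finite (G n)" "\<And>n. G n \<subseteq> F"
    and "\<And>n x. \<bar>g x - (\<Sum>f\<in>G n. c n f * f x)\<bar> < 1 / Suc n"
proof -
  have "\<forall>n::nat. \<exists>G c. finite G \<and> G \<subseteq> F \<and> (\<forall>x. \<bar>g x - (\<Sum>f\<in>G. c f * f x)\<bar> < 1 / Suc n)"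
    using assms unfolding generating_system_def by simp
  then have "\<exists>G. \<forall>n. \<exists>c. finite (G n) \<and> G n \<subseteq> F \<and> (\<forall>x. \<bar>g x - (\<Sum>f\<in>G n. c f * f x)\<bar> < 1 / Suc n)"
    by (rule choice)
  then obtain G where "\<forall>n. \<exists>c. finite (G n) \<and> G n \<subseteq> F \<and> (\<forall>x. \<bar>g x - (\<Sum>f\<in>G n. c f * f x)\<bar> < 1 / Suc n)"
    by blast
  then have "\<exists>c. \<forall>n. finite (G n) \<and> G n \<subseteq> F \<and> (\<forall>x. \<bar>g x - (\<Sum>f\<in>G n. c n f * f x)\<bar> < 1 / Suc n)"
    by (rule choice)
  then show ?thesis
    using that by blast
qed

lemma measurable_integral_generating_system:
  fixes \<Phi> :: "'a \<Rightarrow> 'k::topological_space measure"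
  assumes cK: "compact (UNIV :: 'k set)" and gen: "generating_system F"
    and prob: "\<And>p. p \<in> space N \<Longrightarrow> \<Phi> p \<in> borel_prob_measures"
    and F_measurable: "\<And>f. f \<in> F \<Longrightarrow> (\<lambda>p. \<integral>z. f z \<partial>\<Phi> p) \<in> borel_measurable N"
    and g: "g \<in> cont_funs"
  shows "(\<lambda>p. \<integral>z. g z \<partial>\<Phi> p) \<in> borel_measurable N"
proof -
  have FC: "F \<subseteq> cont_funs"
    using gen by (simp add: generating_system_def)
  obtain G c where G: "\<And>n. finite (G n)" "\<And>n. G n \<subseteq> F"
    and approx: "\<And>n x. \<bar>g x - (\<Sum>f\<in>G n. c n f * f x)\<bar> < 1 / Suc n"
    using generating_system_approximating_sequence[OF gen g] by blast
  define u where "u n p = (\<Sum>f\<in>G n. c n f * (\<integral>z. f z \<partial>\<Phi> p))" for n p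
  show ?thesis
  proof (rule borel_measurable_LIMSEQ_real)
    show "u n \<in> borel_measurable N" for n
      unfolding u_def using G F_measurable by (intro borel_measurable_sum borel_measurable_times) auto
    fix p assume "p \<in> space N"
    then have M: "\<Phi> p \<in> borel_prob_measures"
      by (rule prob)
    have "\<bar>u n p - (\<integral>z. g z \<partial>\<Phi> p)\<bar> \<le> 1 / Suc n" for n
    proof -
      have cont: "f \<in> cont_funs" if "f \<in> G n" for f
        using that G(2) FC by blast
      have "u n p = (\<integral>z. (\<Sum>f\<in>G n. c n f * f z) \<partial>\<Phi> p)"
        unfolding u_def using integrable_cont_fun[OF cK M cont] by (simp add: integral_sum)
      moreover have "(\<lambda>z. \<Sum>f\<in>G n. c n f * f z) \<in> cont_funs"
        using cont by (auto simp: cont_funs_def intro!: continuous_on_sum continuous_on_mult)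
      ultimately show ?thesis
        using abs_integral_diff_le[OF cK M _ g, of "\<lambda>z. \<Sum>f\<in>G n. c n f * f z"] approx[where n = n]
        by (simp add: abs_minus_commute less_imp_le)
    qed
    then have "(\<lambda>n. u n p - (\<integral>z. g z \<partial>\<Phi> p)) \<longlonglongrightarrow> 0"
      by (intro Lim_null_comparison[OF _ LIMSEQ_inverse_real_of_nat]) (simp add: inverse_eq_divide)
    then show "(\<lambda>n. u n p) \<longlonglongrightarrow> (\<integral>z. g z \<partial>\<Phi> p)"
      by (rule LIM_zero_cancel)
  qed
qed

lemma symmetric_moment_representation:
  assumes "moment_function_sequence F w"
  obtains W :: "real \<Rightarrow> real \<Rightarrow> 'k::topological_space measure"
  where "\<And>x y. x \<in> {0..1} \<Longrightarrow> y \<in> {0..1} \<Longrightarrow> W x y \<in> borel_prob_measures"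
    and "\<And>f x y. f \<in> F \<Longrightarrow> x \<in> {0..1} \<Longrightarrow> y \<in> {0..1} \<Longrightarrow> (\<integral>z. f z \<partial>W x y) = w f x y"
    and "\<And>x y. x \<in> {0..1} \<Longrightarrow> y \<in> {0..1} \<Longrightarrow> W x y = W y x"
proof -
  define W where "W x y = (SOME \<mu>. \<mu> \<in> borel_prob_measures \<and> (\<forall>f\<in>F. w f x y = (\<integral>z. f z \<partial>\<mu>)))" for x y
  have W: "W x y \<in> borel_prob_measures \<and> (\<forall>f\<in>F. w f x y = (\<integral>z. f z \<partial>W x y))"
    if "x \<in> {0..1}" "y \<in> {0..1}" for x y
  proof -
    have "\<exists>\<mu>. \<mu> \<in> borel_prob_measures \<and> (\<forall>f\<in>F. w f x y = (\<integral>z. f z \<partial>\<mu>))"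
      using assms that unfolding moment_function_sequence_def moment_sequence_def by blast
    then show ?thesis
      unfolding W_def by (rule someI_ex)
  qed
  have symmetric: "W x y = W y x" if "x \<in> {0..1}" "y \<in> {0..1}" for x y
    unfolding W_def using assms that by (simp add: moment_function_sequence_def)
  show ?thesis
  proof (rule that)
    fix x y :: real assume "x \<in> {0..1}" "y \<in> {0..1}"
    then show "W x y \<in> borel_prob_measures" "W x y = W y x"
      using W symmetric by blast+
  next
    fix f and x y :: real assume "f \<in> F" "x \<in> {0..1}" "y \<in> {0..1}"
    then show "(\<integral>z. f z \<partial>W x y) = w f x y"
      using W by simp
  qed
qed

theorem lemma6:
  fixes F :: "('k::{second_countable_topology, t2_space} \<Rightarrow> real) set"
    and w :: "('k \<Rightarrow> real) \<Rightarrow> real \<Rightarrow> real \<Rightarrow> real"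
  assumes "compact (UNIV :: 'k set)"
    and "generating_system F"
    and "moment_function_sequence F w"
  shows "\<exists>W :: real \<Rightarrow> real \<Rightarrow> 'k measure. K_graphon W \<and>
           (\<forall>f\<in>F. \<forall>x\<in>{0..1}. \<forall>y\<in>{0..1}. (\<integral>z. f z \<partial>(W x y)) = w f x y)"
proof -
  obtain W :: "real \<Rightarrow> real \<Rightarrow> 'k measure"
    where prob: "\<And>x y. x \<in> {0..1} \<Longrightarrow> y \<in> {0..1} \<Longrightarrow> W x y \<in> borel_prob_measures"
      and moments: "\<And>f x y. f \<in> F \<Longrightarrow> x \<in> {0..1} \<Longrightarrow> y \<in> {0..1} \<Longrightarrow> (\<integral>z. f z \<partial>W x y) = w f x y"
      and sym: "\<And>x y. x \<in> {0..1} \<Longrightarrow> y \<in> {0..1} \<Longrightarrow> W x y = W y x"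
    using symmetric_moment_representation[OF assms(3)] by blast
  have space: "space unit_square = {0..1} \<times> {0..1}"
    by (simp add: unit_square_def space_restrict_space)
  have prob': "(\<lambda>(x, y). W x y) p \<in> borel_prob_measures" if "p \<in> space unit_square" for p
    using that prob by (auto simp: space)
  have F_measurable: "(\<lambda>p. \<integral>z. f z \<partial>(\<lambda>(x, y). W x y) p) \<in> borel_measurable unit_square"
    if "f \<in> F" for f
    using assms(3) \<open>f \<in> F\<close> moments
    by (subst measurable_cong[where g = "\<lambda>(x, y). w f x y"]) (auto simp: space moment_function_sequence_def)
  have "(\<lambda>p. \<integral>z. g z \<partial>(\<lambda>(x, y). W x y) p) \<in> borel_measurable unit_square" if "g \<in> cont_funs" for g
    using assms(1,2) prob' F_measurable that by (rule measurable_integral_generating_system)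
  then have "(\<lambda>(x, y). W x y) \<in> unit_square \<rightarrow>\<^sub>M borel_of weak_topology"
    using assms(1) prob' by (intro measurable_weak_topologyI)
  then show ?thesis
    using sym moments unfolding K_graphon_def by blast
qed

end
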